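(* Let $k\ge 2$ be an integer and let $b$ be a nonzero real number. Then $$\Im\left(\sum_{j=0}^{\infty}\frac{1}{(i j+b)^k}\right)=-\frac{(2\pi)^k}{2}\int_{0}^{1}\sum_{j=1}^{k}\frac{c_j(b)\left(u^{k-j}e^{-2\pi b u}-e^{-2\pi b}\right)}{(j-1)!\,(k-j)!}\cot(\pi u)\,du,$$ where $c_j(b)=\delta_{1j}+\mathrm{Li}_{1-j}(e^{-2\pi b})$.
   Context: $i$ denotes the imaginary unit. $\delta_{1j}$ is the Kronecker delta. $\mathrm{Li}_s(z)$ is the polylogarithm, the analytic continuation of $\sum_{m\ge1} z^m/m^s$; for $s=1-j\le 0$ it is a rational function of $z$, defined for $z\ne1$. *)

theory Defs
  imports "HOL-Analysis.Analysis"
begin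

text \<open>Polylogarithm of non-positive integer order, Li_{-n}(z), as the rational
function obtained from Li_0(z) = z/(1-z) via Li_{s-1}(z) = z * d/dz Li_s(z);
this is the analytic continuation, defined for z \<noteq> 1.\<close>
primrec polylog_nonpos :: "nat \<Rightarrow> complex \<Rightarrow> complex" where
  "polylog_nonpos 0 = (\<lambda>z. z / (1 - z))"
| "polylog_nonpos (Suc n) = (\<lambda>z. z * deriv (polylog_nonpos n) z)"

definition c_coef :: "nat \<Rightarrow> real \<Rightarrow> complex" where
  "c_coef j b = (if j = 1 then 1 else 0) + polylog_nonpos (j - 1) (complex_of_real (exp (- 2 * pi * b)))"

end

theory Submission
  imports Defs "HOL-Complex_Analysis.Complex_Analysis"
begin

text \<open>
  Put a = 2\<pi>b, z = exp(-a) and G(u) = \<Sum>j c(j) (u^(k-j) exp(-au) - exp(-a)) / ((j-1)! (k-j)!).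
  The polylogarithm identity Li(-n, z) (1 - z) = z (1 + \<Sum>i<n (n choose i) Li(-i, z)) gives the
  recurrence c(1) (1 - z) = 1, c(n+1) (1 - z) = z \<Sum>i<n (n choose i) c(i+1). It makes G vanish at
  0 and 1 and, together with the moments \<integral>[0,1] u^m exp(-wu) du, yields the Fourier coefficients
  \<integral>[0,1] G(u) exp(2\<pi>imu) du = (a - 2\<pi>im)^(-k) for m \<noteq> 0. So the sine coefficients of G are,
  up to the factor -(2\<pi>)^k/2, the numbers Im (in + b)^(-k). Finally
  cot(\<pi>u) = \<Sum>n=1..N 2 sin(2\<pi>nu) + cos((2N+1)\<pi>u) / sin(\<pi>u), and since G(u)/sin(\<pi>u) extends
  continuously to [0,1], the remainder integral tends to 0 by the Riemann-Lebesgue lemma.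
\<close>

section \<open>Polylogarithms of non-positive order\<close>

lemma polylog_nonpos_holomorphic: "polylog_nonpos n holomorphic_on - {1}"
proof (induction n)
  case 0
  show ?case by (simp, intro holomorphic_intros) auto
next
  case (Suc n)
  show ?case by (simp, intro holomorphic_intros holomorphic_deriv[OF Suc]) auto
qed

lemma sum_binomial_Suc_lessThan:
  fixes a :: "nat \<Rightarrow> 'a::comm_semiring_1"
  shows "(\<Sum>i<Suc n. of_nat (Suc n choose i) * a i) =
    a n + (\<Sum>i<n. of_nat (n choose i) * a i) + (\<Sum>i<n. of_nat (n choose i) * a (Suc i))"
proof -
  have "(\<Sum>i<Suc n. of_nat (Suc n choose i) * a i) =
      a 0 + (\<Sum>i<n. of_nat (n choose Suc i) * a (Suc i)) + (\<Sum>i<n. of_nat (n choose i) * a (Suc i))"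
    by (subst sum.lessThan_Suc_shift) (simp add: sum.distrib algebra_simps)
  also have "a 0 + (\<Sum>i<n. of_nat (n choose Suc i) * a (Suc i)) = (\<Sum>i<Suc n. of_nat (n choose i) * a i)"
    by (subst sum.lessThan_Suc_shift) simp
  finally show ?thesis by (simp add: add.commute)
qed

lemma polylog_nonpos_recurrence:
  fixes z :: complex
  assumes "z \<noteq> 1"
  shows "polylog_nonpos n z * (1 - z) = z * (1 + (\<Sum>i<n. of_nat (n choose i) * polylog_nonpos i z))"
  using assms
proof (induction n arbitrary: z)
  case 0
  then show ?case by (simp add: field_simps)
next
  case (Suc n z)
  let ?L = polylog_nonpos
  have z: "z \<in> - {1}" using Suc.prems by simp
  have dL: "(?L i has_field_derivative deriv (?L i) z) (at z)" for i
    using holomorphic_derivI[OF polylog_nonpos_holomorphic _ z] by auto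
  \<comment> \<open>Differentiate the recurrence for n, which holds on the open set - {1}, and multiply by z.\<close>
  have "eventually (\<lambda>y. y \<in> - {1}) (nhds z)"
    by (rule eventually_nhds_in_open) (use z in auto)
  then have "eventually (\<lambda>y. ?L n y * (1 - y) = y * (1 + (\<Sum>i<n. of_nat (n choose i) * ?L i y))) (nhds z)"
    by (rule eventually_mono) (simp add: Suc.IH)
  then have "deriv (\<lambda>y. ?L n y * (1 - y)) z = deriv (\<lambda>y. y * (1 + (\<Sum>i<n. of_nat (n choose i) * ?L i y))) z"
    by (rule deriv_cong_ev) simp
  moreover have "deriv (\<lambda>y. ?L n y * (1 - y)) z = deriv (?L n) z * (1 - z) - ?L n z"
    by (rule DERIV_imp_deriv) (auto intro!: derivative_eq_intros dL)
  moreover have "deriv (\<lambda>y. y * (1 + (\<Sum>i<n. of_nat (n choose i) * ?L i y))) z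
      = 1 + (\<Sum>i<n. of_nat (n choose i) * ?L i z) + z * (\<Sum>i<n. of_nat (n choose i) * deriv (?L i) z)"
    by (intro DERIV_imp_deriv) (auto intro!: derivative_eq_intros dL simp: sum_distrib_left sum_distrib_right mult_ac)
  ultimately have "deriv (?L n) z * (1 - z)
      = ?L n z + 1 + (\<Sum>i<n. of_nat (n choose i) * ?L i z) + z * (\<Sum>i<n. of_nat (n choose i) * deriv (?L i) z)"
    by (simp add: diff_eq_eq add.assoc)
  then have "?L (Suc n) z * (1 - z)
      = z * (?L n z + 1 + (\<Sum>i<n. of_nat (n choose i) * ?L i z) + z * (\<Sum>i<n. of_nat (n choose i) * deriv (?L i) z))"
    by (simp add: mult.assoc)
  also have "\<dots> = z * ?L n z + z * (1 + (\<Sum>i<n. of_nat (n choose i) * ?L i z))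
      + z * (\<Sum>i<n. of_nat (n choose i) * ?L (Suc i) z)"
    by (simp add: algebra_simps sum_distrib_left)
  also have "\<dots> = z * (1 + (\<Sum>i<Suc n. of_nat (Suc n choose i) * ?L i z))"
    unfolding sum_binomial_Suc_lessThan by (simp add: algebra_simps)
  finally show ?case .
qed

definition polylog_coeff_rec :: "complex \<Rightarrow> (nat \<Rightarrow> complex) \<Rightarrow> bool" where
  "polylog_coeff_rec z c \<longleftrightarrow> c 1 * (1 - z) = 1 \<and>
     (\<forall>n\<ge>1. c (Suc n) * (1 - z) = z * (\<Sum>i<n. of_nat (n choose i) * c (Suc i)))"

lemma c_coef_polylog_coeff_rec:
  assumes "b \<noteq> 0"
  shows "polylog_coeff_rec (exp (- 2 * pi * b)) (\<lambda>j. c_coef j b)"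
  unfolding polylog_coeff_rec_def
proof (intro conjI allI impI)
  define z where "z = complex_of_real (exp (- 2 * pi * b))"
  have "z \<noteq> 1"
    using assms by (simp add: z_def)
  then show "c_coef 1 b * (1 - z) = 1"
    by (simp add: c_coef_def z_def field_simps)
  fix n :: nat
  assume "n \<ge> 1"
  then have "(\<Sum>i<n. of_nat (n choose i) * c_coef (Suc i) b)
      = (\<Sum>i<n. of_nat (n choose i) * (if i = 0 then 1 else 0)) + (\<Sum>i<n. of_nat (n choose i) * polylog_nonpos i z)"
    by (simp add: c_coef_def z_def sum.distrib algebra_simps)
  also have "(\<Sum>i<n. of_nat (n choose i) * (if i = 0 then 1 else 0 :: complex)) = 1"
    using \<open>n \<ge> 1\<close> by (cases n) (simp_all only: sum.lessThan_Suc_shift, simp_all)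
  finally show "c_coef (Suc n) b * (1 - z) = z * (\<Sum>i<n. of_nat (n choose i) * c_coef (Suc i) b)"
    using \<open>n \<ge> 1\<close> polylog_nonpos_recurrence[OF \<open>z \<noteq> 1\<close>, of n] by (simp add: c_coef_def z_def)
qed

section \<open>Fourier coefficients of the kernel\<close>

primrec exp_moment :: "nat \<Rightarrow> complex \<Rightarrow> complex" where
  "exp_moment 0 w = (1 - exp (- w)) / w"
| "exp_moment (Suc m) w = of_nat (Suc m) / w * exp_moment m w - exp (- w) / w"

primrec exp_moment_primitive :: "nat \<Rightarrow> complex \<Rightarrow> complex \<Rightarrow> complex" where
  "exp_moment_primitive 0 w x = - exp (- w * x) / w"
| "exp_moment_primitive (Suc m) w x =
     of_nat (Suc m) / w * exp_moment_primitive m w x - x ^ Suc m * exp (- w * x) / w"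

lemma exp_moment_primitive_has_derivative:
  assumes "w \<noteq> 0"
  shows "(exp_moment_primitive m w has_field_derivative x ^ m * exp (- w * x)) (at x)"
proof (induction m arbitrary: x)
  case 0
  show ?case using assms
    by (auto intro!: derivative_eq_intros simp: field_simps)
next
  case (Suc m)
  have "((\<lambda>x. of_nat (Suc m) / w * exp_moment_primitive m w x - x ^ Suc m * exp (- w * x) / w)
      has_field_derivative of_nat (Suc m) / w * (x ^ m * exp (- w * x))
        - (of_nat (Suc m) * x ^ m * exp (- w * x) - x ^ Suc m * (w * exp (- w * x))) / w) (at x)"
    by (intro DERIV_diff DERIV_cmult Suc.IH DERIV_cdivide DERIV_mult'[THEN DERIV_cong]
        DERIV_power_Suc[OF DERIV_ident, THEN DERIV_cong]) (auto intro!: derivative_eq_intros)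
  moreover have "of_nat (Suc m) / w * (x ^ m * exp (- w * x))
        - (of_nat (Suc m) * x ^ m * exp (- w * x) - x ^ Suc m * (w * exp (- w * x))) / w
      = x ^ Suc m * exp (- w * x)"
    using assms by (simp add: field_simps)
  ultimately show ?case by simp
qed

lemma has_integral_exp_moment:
  assumes "w \<noteq> 0"
  shows "((\<lambda>u::real. (of_real u) ^ m * exp (- w * of_real u)) has_integral exp_moment m w) {0..1}"
proof -
  have "exp_moment_primitive m w 1 - exp_moment_primitive m w 0 = exp_moment m w"
    using assms by (induction m) (simp_all add: field_simps)
  moreover have "((\<lambda>u::real. (of_real u) ^ m * exp (- w * of_real u)) has_integral
      exp_moment_primitive m w (of_real 1) - exp_moment_primitive m w (of_real 0)) {0..1}"
    by (intro fundamental_theorem_of_calculus has_vector_derivative_real_field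
        exp_moment_primitive_has_derivative assms) simp
  ultimately show ?thesis by simp
qed

lemma polylog_coeff_rec_fact:
  assumes "polylog_coeff_rec z c" "n \<ge> 1"
  shows "c (Suc n) * (1 - z) / fact n = z * (\<Sum>i<n. c (Suc i) / (fact i * fact (n - i)))"
proof -
  have "c (Suc n) * (1 - z) / fact n = z * (\<Sum>i<n. of_nat (n choose i) * c (Suc i) / fact n)"
    using assms by (simp add: polylog_coeff_rec_def sum_divide_distrib[symmetric])
  also have "(\<Sum>i<n. of_nat (n choose i) * c (Suc i) / fact n) = (\<Sum>i<n. c (Suc i) / (fact i * fact (n - i)))"
    by (intro sum.cong refl) (simp add: binomial_fact field_simps)
  finally show ?thesis .
qed

lemma sum_coeff_exp_moment:
  assumes rec: "polylog_coeff_rec z c" and w: "w \<noteq> 0" "exp (- w) = z"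
  shows "(\<Sum>i\<le>n. c (Suc i) * exp_moment (n - i) w / (fact i * fact (n - i))) = 1 / w ^ Suc n"
proof (induction n)
  case 0
  then show ?case using rec w by (simp add: polylog_coeff_rec_def field_simps)
next
  case (Suc n)
  have step: "c (Suc i) * exp_moment (Suc n - i) w / (fact i * fact (Suc n - i))
      = c (Suc i) * exp_moment (n - i) w / (fact i * fact (n - i)) / w
        - z / w * (c (Suc i) / (fact i * fact (Suc n - i)))" if "i \<le> n" for i
  proof -
    have "Suc n - i = Suc (n - i)" using that by simp
    then show ?thesis using w by (simp add: field_simps del: of_nat_Suc)
  qed
  have "(\<Sum>i\<le>Suc n. c (Suc i) * exp_moment (Suc n - i) w / (fact i * fact (Suc n - i)))
      = c (Suc (Suc n)) * exp_moment 0 w / fact (Suc n)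
        + (\<Sum>i\<le>n. c (Suc i) * exp_moment (n - i) w / (fact i * fact (n - i))) / w
        - z / w * (\<Sum>i\<le>n. c (Suc i) / (fact i * fact (Suc n - i)))"
    by (simp add: step sum_subtractf sum_distrib_left sum_divide_distrib)
  also have "z / w * (\<Sum>i\<le>n. c (Suc i) / (fact i * fact (Suc n - i))) = c (Suc (Suc n)) * (1 - z) / fact (Suc n) / w"
    using polylog_coeff_rec_fact[OF rec, of "Suc n"] by (simp add: lessThan_Suc_atMost)
  finally show ?case
    unfolding Suc.IH using w by (simp add: field_simps)
qed

definition fourier_kernel :: "(nat \<Rightarrow> complex) \<Rightarrow> complex \<Rightarrow> nat \<Rightarrow> complex \<Rightarrow> complex" where
  "fourier_kernel c a k x =
     (\<Sum>j = 1..k. c j * (x ^ (k - j) * exp (- a * x) - exp (- a)) / (fact (j - 1) * fact (k - j)))"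

lemma fourier_kernel_at_0:
  assumes rec: "polylog_coeff_rec (exp (- a)) c" and "k \<ge> 2"
  shows "fourier_kernel c a k 0 = 0"
proof -
  obtain n where k: "k = Suc n" and "n \<ge> 1" using \<open>k \<ge> 2\<close> by (cases k) auto
  have "fourier_kernel c a k 0 = (\<Sum>i\<le>n. c (Suc i) * (0 ^ (n - i) - exp (- a)) / (fact i * fact (n - i)))"
    unfolding fourier_kernel_def k by (simp only: One_nat_def sum.shift_bounds_cl_Suc_ivl atLeast0AtMost) simp
  also have "\<dots> = c (Suc n) * (1 - exp (- a)) / fact n - exp (- a) * (\<Sum>i<n. c (Suc i) / (fact i * fact (n - i)))"
    by (simp add: lessThan_Suc_atMost[symmetric] sum_distrib_left sum_negf[symmetric] del: sum_negf)
      (intro sum.cong; simp add: zero_power)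
  also have "\<dots> = 0"
    using polylog_coeff_rec_fact[OF rec \<open>n \<ge> 1\<close>] by simp
  finally show ?thesis .
qed

lemma fourier_kernel_holomorphic: "fourier_kernel c a k holomorphic_on UNIV"
  unfolding fourier_kernel_def[abs_def] by (intro holomorphic_intros) simp

lemma has_integral_fourier_kernel_exp:
  fixes m :: int
  assumes rec: "polylog_coeff_rec (exp (- a)) c" and "k \<ge> 1" and "m \<noteq> 0"
  shows "((\<lambda>u. fourier_kernel c a k (of_real u) * exp (\<i> * of_real (2 * pi * m * u)))
      has_integral 1 / (a - \<i> * of_real (2 * pi * m)) ^ k) {0..1}"
proof -
  define w where "w = a - \<i> * of_real (2 * pi * m)"
  define w' where "w' = - \<i> * of_real (2 * pi * m)"
  have "w' \<noteq> 0"
    using \<open>m \<noteq> 0\<close> by (simp add: w'_def)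
  have period: "exp (\<i> * of_real (2 * pi * m)) = 1"
    using exp_2pi_1_int[of m] by (simp add: mult_ac)
  then have exp_w: "exp (- w) = exp (- a)"
    by (simp add: w_def exp_diff exp_minus field_simps)
  moreover have "exp (- a) \<noteq> 1"
    using rec by (auto simp: polylog_coeff_rec_def)
  ultimately have "w \<noteq> 0" by auto
  have exp_w': "exp (- w') = 1"
    using period by (simp add: w'_def)
  have integrand: "fourier_kernel c a k (of_real u) * exp (\<i> * of_real (2 * pi * m * u))
      = (\<Sum>j = 1..k. c j / (fact (j - 1) * fact (k - j)) *
          ((of_real u) ^ (k - j) * exp (- w * of_real u) - exp (- a) * ((of_real u) ^ 0 * exp (- w' * of_real u))))"
    for u :: real
  proof -
    have "exp (- a * of_real u) * exp (\<i> * of_real (2 * pi * m * u)) = exp (- w * of_real u)"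
      by (simp add: w_def algebra_simps flip: exp_add)
    moreover have "exp (\<i> * of_real (2 * pi * m * u)) = exp (- w' * of_real u)"
      by (simp add: w'_def mult_ac)
    ultimately show ?thesis
      unfolding fourier_kernel_def sum_distrib_right by (intro sum.cong) (simp_all add: field_simps)
  qed
  have "((\<lambda>u. fourier_kernel c a k (of_real u) * exp (\<i> * of_real (2 * pi * m * u))) has_integral
      (\<Sum>j = 1..k. c j / (fact (j - 1) * fact (k - j)) * (exp_moment (k - j) w - exp (- a) * exp_moment 0 w'))) {0..1}"
    unfolding integrand
    by (intro has_integral_sum finite_atLeastAtMost has_integral_mult_right has_integral_diff
        has_integral_exp_moment \<open>w \<noteq> 0\<close> \<open>w' \<noteq> 0\<close>)
  also obtain n where "k = Suc n" using \<open>k \<ge> 1\<close> by (cases k) auto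
  then have "(\<Sum>j = 1..k. c j / (fact (j - 1) * fact (k - j)) * (exp_moment (k - j) w - exp (- a) * exp_moment 0 w'))
      = (\<Sum>i\<le>n. c (Suc i) * exp_moment (n - i) w / (fact i * fact (n - i)))"
    by (simp only: One_nat_def sum.shift_bounds_cl_Suc_ivl atLeast0AtMost) (simp add: exp_w')
  also have "\<dots> = 1 / w ^ k"
    using sum_coeff_exp_moment[OF rec \<open>w \<noteq> 0\<close> exp_w] \<open>k = Suc n\<close> by simp
  finally show ?thesis by (simp add: w_def)
qed

lemma has_integral_fourier_kernel_sin:
  fixes n :: nat
  assumes rec: "polylog_coeff_rec (exp (- a)) c" and "k \<ge> 1" "n \<ge> 1"
  shows "((\<lambda>u. fourier_kernel c a k (of_real u) * of_real (2 * sin (2 * pi * n * u))) has_integral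
      (1 / (a - \<i> * of_real (2 * pi * n)) ^ k - 1 / (a + \<i> * of_real (2 * pi * n)) ^ k) / \<i>) {0..1}"
proof -
  let ?F = "\<lambda>u. fourier_kernel c a k (of_real u)"
  let ?x = "\<lambda>u. complex_of_real (2 * pi * n * u)"
  have pos: "((\<lambda>u. ?F u * exp (\<i> * ?x u)) has_integral 1 / (a - \<i> * of_real (2 * pi * n)) ^ k) {0..1}"
    using has_integral_fourier_kernel_exp[OF rec \<open>k \<ge> 1\<close>, of "int n"] \<open>n \<ge> 1\<close> by simp
  have neg: "((\<lambda>u. ?F u * exp (- (\<i> * ?x u))) has_integral 1 / (a + \<i> * of_real (2 * pi * n)) ^ k) {0..1}"
    using has_integral_fourier_kernel_exp[OF rec \<open>k \<ge> 1\<close>, of "- int n"] \<open>n \<ge> 1\<close> by simp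
  have pointwise: "?F u * of_real (2 * sin (2 * pi * n * u)) = (?F u * exp (\<i> * ?x u) - ?F u * exp (- (\<i> * ?x u))) / \<i>"
    for u
    by (simp add: sin_exp_eq field_simps flip: sin_of_real)
  show ?thesis
    unfolding pointwise by (intro has_integral_divide has_integral_diff pos neg)
qed

section \<open>A Riemann-Lebesgue lemma\<close>

lemma integral_eq_sum_equal_cells:
  fixes f :: "real \<Rightarrow> 'a::banach"
  assumes "f integrable_on {0..1}" "M > 0"
  shows "integral {0..1} f = (\<Sum>l<M. integral {real l / M..real (Suc l) / M} f)"
proof -
  have "integral {0..real m / M} f = (\<Sum>l<m. integral {real l / M..real (Suc l) / M} f)" if "m \<le> M" for m
    using that
  proof (induction m)
    case (Suc m)
    have "f integrable_on {0..real (Suc m) / M}"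
      by (rule integrable_on_subinterval[OF assms(1)]) (use Suc.prems in \<open>auto simp: field_simps\<close>)
    then have "integral {0..real m / M} f + integral {real m / M..real (Suc m) / M} f
        = integral {0..real (Suc m) / M} f"
      using assms(2) by (intro Henstock_Kurzweil_Integration.integral_combine) (auto simp: field_simps)
    then show ?case using Suc by simp
  qed simp
  from this[of M] show ?thesis using assms(2) by simp
qed

lemma has_integral_cos_over_half_period:
  assumes "M > 0"
  shows "((\<lambda>u. cos (M * pi * u)) has_integral 0) {real l / M..real (Suc l) / M}"
proof -
  have "((\<lambda>u. cos (M * pi * u)) has_integral
      sin (M * pi * (real (Suc l) / M)) / (M * pi) - sin (M * pi * (real l / M)) / (M * pi))
      {real l / M..real (Suc l) / M}"
    using assms
    by (intro fundamental_theorem_of_calculus)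
      (auto intro!: derivative_eq_intros simp: field_simps simp flip: has_real_derivative_iff_has_vector_derivative)
  then show ?thesis
    using assms by (simp add: field_simps del: of_nat_Suc)
qed

lemma norm_integral_mult_cos_le:
  fixes h :: "real \<Rightarrow> complex"
  assumes "continuous_on {a..b} h" "a \<le> b" "((\<lambda>u. cos (\<omega> * u)) has_integral 0) {a..b}"
    and "\<And>t. t \<in> {a..b} \<Longrightarrow> norm (h t - h a) \<le> e"
  shows "norm (integral {a..b} (\<lambda>u. h u * of_real (cos (\<omega> * u)))) \<le> e * (b - a)"
proof -
  have const: "((\<lambda>u. h a * of_real (cos (\<omega> * u))) has_integral 0) {a..b}"
    using has_integral_mult_right[OF has_integral_of_real[OF assms(3)]] by simp
  have "(\<lambda>u. h u * of_real (cos (\<omega> * u))) integrable_on {a..b}"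
    by (intro integrable_continuous_interval continuous_intros assms(1))
  then have "integral {a..b} (\<lambda>u. h u * of_real (cos (\<omega> * u)))
      = integral {a..b} (\<lambda>u. (h u - h a) * of_real (cos (\<omega> * u)))"
    using integral_diff[OF _ has_integral_integrable[OF const]] integral_unique[OF const]
    by (simp add: left_diff_distrib)
  also have "norm \<dots> \<le> e * (b - a)"
  proof (rule integral_bound[OF assms(2)])
    show "continuous_on {a..b} (\<lambda>u. (h u - h a) * of_real (cos (\<omega> * u)))"
      by (intro continuous_intros assms(1))
    fix t assume "t \<in> {a..b}"
    have "norm ((h t - h a) * of_real (cos (\<omega> * t))) \<le> norm (h t - h a) * 1"
      unfolding norm_mult by (intro mult_left_mono) auto
    with assms(4)[OF \<open>t \<in> {a..b}\<close>] show "norm ((h t - h a) * of_real (cos (\<omega> * t))) \<le> e"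
      by simp
  qed
  finally show ?thesis .
qed

lemma norm_integral_mult_cos_multiple_le:
  fixes h :: "real \<Rightarrow> complex" and M :: nat
  assumes "continuous_on {0..1} h" "M > 0"
    and "\<And>s t. s \<in> {0..1} \<Longrightarrow> t \<in> {0..1} \<Longrightarrow> \<bar>t - s\<bar> \<le> 1 / M \<Longrightarrow> norm (h t - h s) \<le> e"
  shows "norm (integral {0..1} (\<lambda>u. h u * of_real (cos (M * pi * u)))) \<le> e"
proof -
  define f where "f = (\<lambda>u. h u * of_real (cos (M * pi * u)))"
  have cell: "norm (integral {real l / M..real (Suc l) / M} f) \<le> e * (1 / M)" if "l < M" for l
  proof -
    have sub: "{real l / M..real (Suc l) / M} \<subseteq> {0..1}"
      using that by (auto simp: field_simps)
    have "norm (h t - h (real l / M)) \<le> e" if "t \<in> {real l / M..real (Suc l) / M}" for t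
    proof (rule assms(3))
      show "t \<in> {0..1}"
        using that sub by blast
      show "real l / M \<in> {0..1}"
        using \<open>l < M\<close> by (auto simp: field_simps)
      show "\<bar>t - real l / M\<bar> \<le> 1 / M"
        using that by (auto simp: add_divide_distrib)
    qed
    then have "norm (integral {real l / M..real (Suc l) / M} f) \<le> e * (real (Suc l) / M - real l / M)"
      unfolding f_def
      by (intro norm_integral_mult_cos_le continuous_on_subset[OF assms(1) sub]
          has_integral_cos_over_half_period \<open>M > 0\<close>) (use \<open>M > 0\<close> in \<open>auto simp: divide_right_mono\<close>)
    moreover have "real (Suc l) / M - real l / M = 1 / M"
      by (simp add: diff_divide_distrib[symmetric])
    ultimately show ?thesis by simp
  qed
  have "f integrable_on {0..1}"
    unfolding f_def by (intro integrable_continuous_interval continuous_intros assms(1))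
  then have "norm (integral {0..1} f) \<le> (\<Sum>l<M. norm (integral {real l / M..real (Suc l) / M} f))"
    using integral_eq_sum_equal_cells[of f M] \<open>M > 0\<close> by (simp add: norm_sum)
  also have "\<dots> \<le> (\<Sum>l<M. e * (1 / M))"
    by (intro sum_mono cell) simp
  also have "\<dots> = e"
    using \<open>M > 0\<close> by simp
  finally show ?thesis by (simp add: f_def)
qed

lemma riemann_lebesgue_cos:
  fixes h :: "real \<Rightarrow> complex"
  assumes "continuous_on {0..1} h"
  shows "(\<lambda>M::nat. integral {0..1} (\<lambda>u. h u * of_real (cos (M * pi * u)))) \<longlonglongrightarrow> 0"
proof (rule LIMSEQ_I)
  fix r :: real assume "r > 0"
  obtain d where "d > 0" and d: "\<And>s t. s \<in> {0..1} \<Longrightarrow> t \<in> {0..1} \<Longrightarrow> dist t s < d \<Longrightarrow> dist (h t) (h s) < r / 2"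
    using compact_uniformly_continuous[OF assms compact_Icc] \<open>r > 0\<close>
    unfolding uniformly_continuous_on_def by (metis half_gt_zero)
  obtain N :: nat where "1 / d < N" using reals_Archimedean2 by blast
  show "\<exists>N. \<forall>M::nat\<ge>N. norm (integral {0..1} (\<lambda>u. h u * of_real (cos (M * pi * u))) - 0) < r"
  proof (intro exI allI impI)
    fix M :: nat assume "M \<ge> Suc N"
    then have "M > 0" "1 / d < M"
      using \<open>1 / d < N\<close> by auto
    then have "1 / M < d"
      using \<open>d > 0\<close> by (simp add: field_simps)
    then have "norm (h t - h s) \<le> r / 2" if "s \<in> {0..1}" "t \<in> {0..1}" "\<bar>t - s\<bar> \<le> 1 / M" for s t
      using d[OF that(1,2)] that(3) by (simp add: dist_norm dist_real_def)
    from norm_integral_mult_cos_multiple_le[OF assms \<open>M > 0\<close> this]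
    show "norm (integral {0..1} (\<lambda>u. h u * of_real (cos (M * pi * u))) - 0) < r"
      using \<open>r > 0\<close> by simp
  qed
qed

section \<open>Sine expansion of the cotangent\<close>

lemma holomorphic_div_sin_pi_tendsto:
  fixes f :: "complex \<Rightarrow> complex" and w0 :: complex
  assumes "f holomorphic_on UNIV" "w0 = 0 \<or> w0 = 1" "f w0 = 0"
  shows "((\<lambda>w. f w / sin (pi * w)) \<longlongrightarrow> deriv f w0 / (pi * cos (pi * w0))) (at w0)"
proof (rule lhopital_complex_simple)
  show "(f has_field_derivative deriv f w0) (at w0)"
    using assms(1) by (auto intro: holomorphic_derivI)
  show "((\<lambda>w. sin (pi * w)) has_field_derivative pi * cos (pi * w0)) (at w0)"
    by (auto intro!: derivative_eq_intros)
qed (use assms(2,3) in auto)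

lemma holomorphic_div_sin_pi_continuous:
  fixes f :: "complex \<Rightarrow> complex"
  assumes holo: "f holomorphic_on UNIV" and "f 0 = 0" "f 1 = 0"
  obtains H :: "real \<Rightarrow> complex"
  where "continuous_on {0..1} H" "\<And>u. u \<in> {0<..<1} \<Longrightarrow> f (of_real u) = H u * of_real (sin (pi * u))"
proof
  define Q where "Q w = (if w = 0 \<or> w = 1 then deriv f w / (pi * cos (pi * w)) else f w / sin (pi * w))"
    for w :: complex
  have "isCont Q (of_real u)" if "u \<in> {0..1}" for u
  proof (cases "u = 0 \<or> u = 1")
    case True
    define w0 :: complex where "w0 = of_real u"
    have "w0 = 0 \<or> w0 = 1" using True by (auto simp: w0_def)
    then have "((\<lambda>w. f w / sin (pi * w)) \<longlongrightarrow> Q w0) (at w0)"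
      using holomorphic_div_sin_pi_tendsto[OF holo] assms(2,3) by (auto simp: Q_def)
    moreover have "eventually (\<lambda>w. w \<noteq> 0 \<and> w \<noteq> 1) (at w0)"
      by (intro eventually_conj eventually_neq_at_within)
    then have "eventually (\<lambda>w. f w / sin (pi * w) = Q w) (at w0)"
      by (rule eventually_mono) (simp add: Q_def)
    ultimately have "(Q \<longlongrightarrow> Q w0) (at w0)"
      by (rule Lim_transform_eventually)
    then show ?thesis by (simp add: isCont_def w0_def)
  next
    case False
    with that have "sin (pi * u) \<noteq> 0"
      using sin_gt_zero[of "pi * u"] by auto
    then have "sin (pi * complex_of_real u) \<noteq> 0"
      by (simp add: sin_of_real flip: of_real_mult)
    moreover have "eventually (\<lambda>w::complex. w \<in> - {0, 1}) (nhds (of_real u))"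
      by (rule eventually_nhds_in_open) (use False in auto)
    then have ev: "eventually (\<lambda>w::complex. Q w = f w / sin (pi * w)) (nhds (of_real u))"
      by (rule eventually_mono) (simp add: Q_def)
    moreover have "isCont f (of_real u)"
      using holomorphic_on_imp_continuous_on[OF holo] by (simp add: continuous_on_eq_continuous_at)
    ultimately show ?thesis
      by (subst isCont_cong[OF ev]) (auto intro!: continuous_intros)
  qed
  then show "continuous_on {0..1} (\<lambda>u. Q (of_real u))"
    by (intro continuous_at_imp_continuous_on ballI isCont_o2[OF isCont_of_real]) auto
  fix u :: real assume "u \<in> {0<..<1}"
  then have "sin (pi * u) \<noteq> 0"
    using sin_gt_zero[of "pi * u"] by auto
  with \<open>u \<in> {0<..<1}\<close> show "f (of_real u) = Q (of_real u) * of_real (sin (pi * u))"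
    by (simp add: Q_def sin_of_real flip: of_real_mult)
qed

lemma cot_pi_eq_sin_sum_plus_remainder:
  fixes N :: nat
  assumes "sin (pi * u) \<noteq> 0"
  shows "cot (pi * u) = (\<Sum>n::nat=1..N. 2 * sin (2 * pi * n * u)) + cos (real (2 * N + 1) * pi * u) / sin (pi * u)"
proof (induction N)
  case 0
  then show ?case by (simp add: cot_def)
next
  case (Suc N)
  \<comment> \<open>cos(A - x) - cos(A + x) = 2 sin A sin x\<close>
  have "cos ((2 * N + 1) * pi * u) = cos (2 * pi * Suc N * u - pi * u)"
    "cos ((2 * Suc N + 1) * pi * u) = cos (2 * pi * Suc N * u + pi * u)"
    by (simp_all add: algebra_simps)
  then have "cos ((2 * N + 1) * pi * u) / sin (pi * u)
      = 2 * sin (2 * pi * Suc N * u) + cos ((2 * Suc N + 1) * pi * u) / sin (pi * u)"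
    using assms by (simp only: cos_diff cos_add) (simp add: field_simps)
  then show ?case using Suc by simp
qed

lemma has_integral_mult_cot_pi:
  fixes g H :: "real \<Rightarrow> complex" and N :: nat
  assumes "continuous_on {0..1} g" "continuous_on {0..1} H"
    and g_eq: "\<And>u. u \<in> {0<..<1} \<Longrightarrow> g u = H u * of_real (sin (pi * u))"
  shows "((\<lambda>u. g u * of_real (cot (pi * u))) has_integral
      (\<Sum>n::nat=1..N. integral {0..1} (\<lambda>u. g u * of_real (2 * sin (2 * pi * n * u))))
      + integral {0..1} (\<lambda>u. H u * of_real (cos (real (2 * N + 1) * pi * u)))) {0..1}"
proof -
  have pointwise: "g u * of_real (cot (pi * u))
      = (\<Sum>n::nat=1..N. g u * of_real (2 * sin (2 * pi * n * u)))
        + H u * of_real (cos (real (2 * N + 1) * pi * u))" if "u \<in> {0..1} - {0, 1}" for u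
  proof -
    have "u \<in> {0<..<1}" using that by auto
    then have "sin (pi * u) \<noteq> 0"
      using sin_gt_zero[of "pi * u"] by auto
    then have "sin (pi * u) * cot (pi * u)
        = sin (pi * u) * (\<Sum>n::nat=1..N. 2 * sin (2 * pi * n * u)) + cos (real (2 * N + 1) * pi * u)"
      using cot_pi_eq_sin_sum_plus_remainder[of u N] by (simp add: distrib_left)
    then show ?thesis
      unfolding g_eq[OF \<open>u \<in> {0<..<1}\<close>]
      by (simp add: sum_distrib_left algebra_simps flip: of_real_mult)
  qed
  have int: "((\<lambda>u. (\<Sum>n::nat=1..N. g u * of_real (2 * sin (2 * pi * n * u)))
      + H u * of_real (cos (real (2 * N + 1) * pi * u))) has_integral
      (\<Sum>n::nat=1..N. integral {0..1} (\<lambda>u. g u * of_real (2 * sin (2 * pi * n * u))))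
      + integral {0..1} (\<lambda>u. H u * of_real (cos (real (2 * N + 1) * pi * u)))) {0..1}"
    by (intro has_integral_add has_integral_sum finite_atLeastAtMost integrable_integral
        integrable_continuous_interval continuous_intros assms(1,2))
  show ?thesis
    by (rule has_integral_spike_finite[of "{0, 1}", OF _ pointwise int]) simp_all
qed

lemma sin_sums_tendsto_integral_cot:
  fixes f :: "complex \<Rightarrow> complex"
  assumes holo: "f holomorphic_on UNIV" and "f 0 = 0" "f 1 = 0"
  shows "(\<lambda>N. \<Sum>n::nat=1..N. integral {0..1} (\<lambda>u. f (of_real u) * of_real (2 * sin (2 * pi * n * u))))
    \<longlonglongrightarrow> integral {0..1} (\<lambda>u. f (of_real u) * of_real (cot (pi * u)))"
proof -
  obtain H where H: "continuous_on {0..1} H"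
    and f_eq: "\<And>u. u \<in> {0<..<1} \<Longrightarrow> f (of_real u) = H u * of_real (sin (pi * u))"
    using holomorphic_div_sin_pi_continuous[OF assms] by metis
  have "continuous_on {0..1} (\<lambda>u. f (of_real u))"
    by (rule continuous_on_compose2[OF holomorphic_on_imp_continuous_on[OF holo] continuous_on_of_real_id]) simp
  from integral_unique[OF has_integral_mult_cot_pi[OF this H f_eq]]
  have "(\<Sum>n::nat=1..N. integral {0..1} (\<lambda>u. f (of_real u) * of_real (2 * sin (2 * pi * n * u))))
      = integral {0..1} (\<lambda>u. f (of_real u) * of_real (cot (pi * u)))
        - integral {0..1} (\<lambda>u. H u * of_real (cos (real (2 * N + 1) * pi * u)))" for N
    by (simp add: algebra_simps)
  moreover have "(\<lambda>N. integral {0..1} (\<lambda>u. H u * of_real (cos (real (2 * N + 1) * pi * u)))) \<longlonglongrightarrow> 0"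
  proof -
    have "strict_mono (\<lambda>N::nat. 2 * N + 1)" by (rule strict_monoI) simp
    from LIMSEQ_subseq_LIMSEQ[OF riemann_lebesgue_cos[OF H] this] show ?thesis
      by (simp add: o_def)
  qed
  ultimately show ?thesis
    using tendsto_diff[OF tendsto_const] by fastforce
qed

section \<open>The series of inverse powers\<close>

lemma summable_inverse_power_imag_plus_real:
  assumes "k \<ge> 2"
  shows "summable (\<lambda>j::nat. 1 / (\<i> * of_nat j + of_real b) ^ k)"
proof (rule summable_comparison_test'[OF inverse_power_summable[of 2, OF order_refl]])
  fix j :: nat assume "j \<ge> 1"
  have "real j \<le> norm (\<i> * of_nat j + complex_of_real b)"
    using abs_Im_le_cmod[of "\<i> * of_nat j + complex_of_real b"] by simp
  then have "real j ^ k \<le> norm (\<i> * of_nat j + complex_of_real b) ^ k"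
    by (rule power_mono) simp
  moreover have "real j ^ 2 \<le> real j ^ k"
    using assms \<open>j \<ge> 1\<close> by (intro power_increasing) auto
  ultimately have "real j ^ 2 \<le> norm (\<i> * of_nat j + complex_of_real b) ^ k"
    by linarith
  moreover have "0 < real j ^ 2"
    using \<open>j \<ge> 1\<close> by simp
  ultimately have "inverse (norm (\<i> * of_nat j + complex_of_real b) ^ k) \<le> inverse (real j ^ 2)"
    by (rule le_imp_inverse_le)
  then show "norm (1 / (\<i> * of_nat j + of_real b) ^ k) \<le> inverse (of_nat j ^ 2 :: real)"
    by (simp add: norm_divide norm_power divide_inverse norm_inverse)
qed

lemma tendsto_Im_partial_sums:
  fixes f :: "nat \<Rightarrow> complex"
  assumes "summable f" "Im (f 0) = 0"
  shows "(\<lambda>N. \<Sum>n=1..N. complex_of_real (Im (f n))) \<longlonglongrightarrow> complex_of_real (Im (suminf f))"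
proof -
  have "(\<lambda>N. complex_of_real (Im (\<Sum>n\<le>N. f n))) \<longlonglongrightarrow> complex_of_real (Im (suminf f))"
    by (intro tendsto_of_real tendsto_Im summable_LIMSEQ'[OF assms(1)])
  moreover have "complex_of_real (Im (\<Sum>n\<le>N. f n)) = (\<Sum>n=1..N. complex_of_real (Im (f n)))" for N
    using assms(2) by (simp add: atMost_atLeast0 sum.atLeast_Suc_atMost Im_sum)
  ultimately show ?thesis by simp
qed

lemma of_real_Im_inverse_power:
  fixes n :: nat
  assumes "b \<noteq> 0"
  shows "complex_of_real (Im (1 / (\<i> * of_nat n + of_real b) ^ k)) = - complex_of_real ((2 * pi) ^ k / 2) *
    ((1 / (of_real (2 * pi * b) - \<i> * of_real (2 * pi * n)) ^ k
      - 1 / (of_real (2 * pi * b) + \<i> * of_real (2 * pi * n)) ^ k) / \<i>)"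
proof -
  define p where "p = \<i> * of_nat n + complex_of_real b"
  have "p \<noteq> 0" "cnj p \<noteq> 0"
    using assms by (auto simp: p_def complex_eq_iff)
  have plus: "of_real (2 * pi * b) + \<i> * of_real (2 * pi * n) = of_real (2 * pi) * p"
    and minus: "of_real (2 * pi * b) - \<i> * of_real (2 * pi * n) = of_real (2 * pi) * cnj p"
    by (simp_all add: p_def algebra_simps)
  have Im_p: "complex_of_real (Im (1 / p ^ k)) = (1 / p ^ k - 1 / cnj p ^ k) / (2 * \<i>)"
    using complex_diff_cnj[of "1 / p ^ k"] by (simp add: field_simps)
  show ?thesis
    unfolding plus minus p_def[symmetric] Im_p using \<open>p \<noteq> 0\<close> \<open>cnj p \<noteq> 0\<close>
    by (simp add: power_mult_distrib field_simps)
qed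

theorem mainTheorem2:
  fixes k :: nat and b :: real
  assumes "k \<ge> 2" and "b \<noteq> 0"
  shows "complex_of_real (Im (\<Sum>j. 1 / (\<i> * of_nat j + complex_of_real b) ^ k)) =
    - complex_of_real ((2 * pi) ^ k / 2) *
      integral {0..1::real} (\<lambda>u. (\<Sum>j = 1..k.
          c_coef j b * complex_of_real (u ^ (k - j) * exp (- 2 * pi * b * u) - exp (- 2 * pi * b))
          / complex_of_real (fact (j - 1) * fact (k - j))) * complex_of_real (cot (pi * u)))"
proof -
  define a where "a = complex_of_real (2 * pi * b)"
  define F where "F = fourier_kernel (\<lambda>j. c_coef j b) a k"
  define f where "f = (\<lambda>j::nat. 1 / (\<i> * of_nat j + complex_of_real b) ^ k)"
  have rec: "polylog_coeff_rec (exp (- a)) (\<lambda>j. c_coef j b)"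
    using c_coef_polylog_coeff_rec[OF assms(2)] by (simp add: a_def flip: exp_of_real)
  have "F holomorphic_on UNIV" "F 0 = 0" "F 1 = 0"
    using fourier_kernel_holomorphic fourier_kernel_at_0[OF rec assms(1)]
    by (simp_all add: F_def fourier_kernel_def)
  from tendsto_mult_left[OF sin_sums_tendsto_integral_cot[OF this], of "- complex_of_real ((2 * pi) ^ k / 2)"]
  have "(\<lambda>N. \<Sum>n=1..N. complex_of_real (Im (f n)))
      \<longlonglongrightarrow> - complex_of_real ((2 * pi) ^ k / 2) * integral {0..1} (\<lambda>u. F (of_real u) * of_real (cot (pi * u)))"
    using integral_unique[OF has_integral_fourier_kernel_sin[OF rec]] assms
    by (simp add: F_def f_def a_def of_real_Im_inverse_power sum_distrib_left)
  moreover have "(\<lambda>N. \<Sum>n=1..N. complex_of_real (Im (f n))) \<longlonglongrightarrow> complex_of_real (Im (suminf f))"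
    using summable_inverse_power_imag_plus_real[OF assms(1)]
    by (intro tendsto_Im_partial_sums) (simp_all add: f_def flip: of_real_power of_real_divide)
  moreover have "F (of_real u) = (\<Sum>j = 1..k. c_coef j b * complex_of_real (u ^ (k - j) * exp (- 2 * pi * b * u) - exp (- 2 * pi * b))
          / complex_of_real (fact (j - 1) * fact (k - j)))" for u
    by (simp add: F_def a_def fourier_kernel_def flip: exp_of_real)
  ultimately show ?thesis
    by (simp add: f_def LIMSEQ_unique)
qed

end
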